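(* Let $k$ be a field, let $d_1,\ldots,d_n$ be positive integers, let $m\ge 0$ be an integer, and let $f,h \in k[x_1, \dots ,x_n]$ be such that $h^mf \in (x_1^{d_1}, \ldots, x_n^{d_n})$. Then for every $j\in\{1,\ldots,n\}$, \[h^{m+1}f'_{x_j} \in (x_1^{\bar{d_1}}, \ldots , x_n^{\bar{d_n}}),\] where $\bar{d_j}=d_j-1$ and $\bar{d_i}=d_i$ for all $i \ne j$.
   Context: $f'_{x_j}$ denotes the formal partial derivative of the polynomial $f$ with respect to $x_j$. *)

theory Defs
  imports Main "HOL-Library.Poly_Mapping"
begin

text \<open>Variable x_(i+1) of the paper is represented by index i (0-based).\<close>

type_synonym 'a mpoly = "(nat \<Rightarrow>\<^sub>0 nat) \<Rightarrow>\<^sub>0 'a"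

definition Var :: "nat \<Rightarrow> 'a::comm_ring_1 mpoly" where
  "Var i = Poly_Mapping.single (Poly_Mapping.single i 1) 1"

definition vars :: "'a::zero mpoly \<Rightarrow> nat set" where
  "vars p = (\<Union>m\<in>Poly_Mapping.keys p. Poly_Mapping.keys (m :: nat \<Rightarrow>\<^sub>0 nat))"

definition in_poly_ring :: "nat \<Rightarrow> 'a::zero mpoly \<Rightarrow> bool" where
  "in_poly_ring n p \<longleftrightarrow> vars p \<subseteq> {..<n}"

definition pderiv_mp :: "nat \<Rightarrow> 'a::comm_ring_1 mpoly \<Rightarrow> 'a mpoly" where
  "pderiv_mp j p = (\<Sum>m\<in>Poly_Mapping.keys p.
      Poly_Mapping.single (m - Poly_Mapping.single j 1) (of_nat (Poly_Mapping.lookup m j) * Poly_Mapping.lookup p m))"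

definition in_monomial_ideal :: "nat \<Rightarrow> (nat \<Rightarrow> nat) \<Rightarrow> 'a::comm_ring_1 mpoly \<Rightarrow> bool" where
  "in_monomial_ideal n e p \<longleftrightarrow>
     (\<exists>g. (\<forall>i<n. in_poly_ring n (g i)) \<and> p = (\<Sum>i<n. g i * Var i ^ e i))"

end

theory Submission
  imports Defs
begin

text \<open>The identity \<open>h\<^sup>m\<^sup>+\<^sup>1 f' = h (h\<^sup>m f)' - m h' (h\<^sup>m f)\<close> reduces the claim to three facts about
  the monomial ideal \<open>I(d) = (x\<^sub>1\<^bsup>d\<^sub>1\<^esup>, \<dots>, x\<^sub>n\<^bsup>d\<^sub>n\<^esup>)\<close>: it is an ideal, it shrinks when the exponents grow,
  and \<open>\<partial>/\<partial>x\<^sub>j\<close> maps it into the ideal with \<open>d\<^sub>j\<close> lowered by one, because \<open>(g x\<^sub>i\<^bsup>d\<^sub>i\<^esup>)' = g' x\<^sub>i\<^bsup>d\<^sub>i\<^esup> + g (x\<^sub>i\<^bsup>d\<^sub>i\<^esup>)'\<close> and the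
  second summand vanishes for \<open>i \<noteq> j\<close> and is a multiple of \<open>x\<^sub>j\<^bsup>d\<^sub>j - 1\<^esup>\<close> for \<open>i = j\<close>.\<close>

lemma mpoly_eq_sum_single:
  "p = (\<Sum>m\<in>Poly_Mapping.keys p. Poly_Mapping.single m (Poly_Mapping.lookup p m))"
  by (rule poly_mapping_eqI) (simp add: lookup_sum lookup_single when_def in_keys_iff)

lemma pderiv_mp_single:
  "pderiv_mp j (Poly_Mapping.single a c :: 'a::comm_ring_1 mpoly)
     = Poly_Mapping.single (a - Poly_Mapping.single j 1) (of_nat (Poly_Mapping.lookup a j) * c)"
  by (cases "c = 0") (simp_all add: pderiv_mp_def)

lemma pderiv_mp_zero [simp]: "pderiv_mp j (0 :: 'a::comm_ring_1 mpoly) = 0"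
  by (simp add: pderiv_mp_def)

lemma pderiv_mp_eq_sum_over_superset:
  assumes "finite S" "Poly_Mapping.keys p \<subseteq> S"
  shows "pderiv_mp j (p :: 'a::comm_ring_1 mpoly)
           = (\<Sum>m\<in>S. pderiv_mp j (Poly_Mapping.single m (Poly_Mapping.lookup p m)))"
proof -
  have "pderiv_mp j p
          = (\<Sum>m\<in>Poly_Mapping.keys p. pderiv_mp j (Poly_Mapping.single m (Poly_Mapping.lookup p m)))"
    by (simp add: pderiv_mp_def[of j p] pderiv_mp_single)
  also have "\<dots> = (\<Sum>m\<in>S. pderiv_mp j (Poly_Mapping.single m (Poly_Mapping.lookup p m)))"
    by (rule sum.mono_neutral_left[OF assms]) (simp add: pderiv_mp_single in_keys_iff)
  finally show ?thesis .
qed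

lemma pderiv_mp_add:
  "pderiv_mp j (p + q :: 'a::comm_ring_1 mpoly) = pderiv_mp j p + pderiv_mp j q"
proof -
  define S where "S = Poly_Mapping.keys p \<union> Poly_Mapping.keys q"
  have S: "finite S" "Poly_Mapping.keys p \<subseteq> S" "Poly_Mapping.keys q \<subseteq> S"
          "Poly_Mapping.keys (p + q) \<subseteq> S"
    using keys_add[of p q] by (auto simp: S_def)
  have "pderiv_mp j (p + q)
          = (\<Sum>m\<in>S. pderiv_mp j (Poly_Mapping.single m (Poly_Mapping.lookup (p + q) m)))"
    by (rule pderiv_mp_eq_sum_over_superset[OF S(1) S(4)])
  also have "\<dots> = (\<Sum>m\<in>S. pderiv_mp j (Poly_Mapping.single m (Poly_Mapping.lookup p m))
                         + pderiv_mp j (Poly_Mapping.single m (Poly_Mapping.lookup q m)))"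
    unfolding pderiv_mp_single by (simp add: lookup_add single_add distrib_left)
  also have "\<dots> = pderiv_mp j p + pderiv_mp j q"
    by (simp only: sum.distrib pderiv_mp_eq_sum_over_superset[OF S(1) S(2), symmetric]
        pderiv_mp_eq_sum_over_superset[OF S(1) S(3), symmetric])
  finally show ?thesis .
qed

lemma pderiv_mp_sum:
  "pderiv_mp j (\<Sum>i\<in>A. f i :: 'a::comm_ring_1 mpoly) = (\<Sum>i\<in>A. pderiv_mp j (f i))"
  by (induction A rule: infinite_finite_induct) (simp_all add: pderiv_mp_add)

lemma pderiv_mp_mult_single:
  "pderiv_mp j (Poly_Mapping.single a c * Poly_Mapping.single b e :: 'a::comm_ring_1 mpoly)
     = pderiv_mp j (Poly_Mapping.single a c) * Poly_Mapping.single b e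
       + Poly_Mapping.single a c * pderiv_mp j (Poly_Mapping.single b e)"
proof -
  have shift: "x - Poly_Mapping.single j 1 + y = x + y - Poly_Mapping.single j (1::nat)"
    if "Poly_Mapping.lookup x j \<noteq> 0" for x y :: "nat \<Rightarrow>\<^sub>0 nat"
    by (rule poly_mapping_eqI) (use that in \<open>auto simp: lookup_minus lookup_add lookup_single when_def\<close>)
  have left: "Poly_Mapping.single (a - Poly_Mapping.single j 1 + b) (of_nat (Poly_Mapping.lookup a j) * c * e)
      = Poly_Mapping.single (a + b - Poly_Mapping.single j 1) (of_nat (Poly_Mapping.lookup a j) * c * e)"
    using shift[of a b] by (cases "Poly_Mapping.lookup a j = 0") simp_all
  have right: "Poly_Mapping.single (a + (b - Poly_Mapping.single j 1)) (c * (of_nat (Poly_Mapping.lookup b j) * e))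
      = Poly_Mapping.single (a + b - Poly_Mapping.single j 1) (of_nat (Poly_Mapping.lookup b j) * c * e)"
    using shift[of b a]
    by (cases "Poly_Mapping.lookup b j = 0") (simp_all add: add.commute mult.left_commute mult.assoc)
  show ?thesis
    unfolding mult_single pderiv_mp_single left right
    by (simp add: lookup_add distrib_right single_add[symmetric] mult.assoc)
qed

lemma pderiv_mp_mult:
  "pderiv_mp j (p * q :: 'a::comm_ring_1 mpoly) = pderiv_mp j p * q + p * pderiv_mp j q"
proof -
  let ?P = "Poly_Mapping.keys p" and ?Q = "Poly_Mapping.keys q"
  let ?p = "\<lambda>a. Poly_Mapping.single a (Poly_Mapping.lookup p a)"
  let ?q = "\<lambda>b. Poly_Mapping.single b (Poly_Mapping.lookup q b)"
  have "p * q = (\<Sum>a\<in>?P. \<Sum>b\<in>?Q. ?p a * ?q b)"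
    by (subst mpoly_eq_sum_single[of p], subst mpoly_eq_sum_single[of q]) (simp add: sum_product)
  then have "pderiv_mp j (p * q)
               = (\<Sum>a\<in>?P. \<Sum>b\<in>?Q. pderiv_mp j (?p a) * ?q b + ?p a * pderiv_mp j (?q b))"
    by (simp add: pderiv_mp_sum pderiv_mp_mult_single)
  also have "\<dots> = (\<Sum>a\<in>?P. pderiv_mp j (?p a)) * (\<Sum>b\<in>?Q. ?q b)
                  + (\<Sum>a\<in>?P. ?p a) * (\<Sum>b\<in>?Q. pderiv_mp j (?q b))"
    by (simp add: sum.distrib sum_product)
  also have "\<dots> = pderiv_mp j p * q + p * pderiv_mp j q"
    using pderiv_mp_eq_sum_over_superset[of ?P p j] pderiv_mp_eq_sum_over_superset[of ?Q q j]
      mpoly_eq_sum_single[of p] mpoly_eq_sum_single[of q]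
    by simp
  finally show ?thesis .
qed

lemma pderiv_mp_one: "pderiv_mp j (1 :: 'a::comm_ring_1 mpoly) = 0"
  using pderiv_mp_single[of j 0 1] by simp

lemma pderiv_mp_power:
  "pderiv_mp j (p ^ k :: 'a::comm_ring_1 mpoly) = of_nat k * p ^ (k - 1) * pderiv_mp j p"
proof (induction k)
  case (Suc k)
  then show ?case by (cases k) (simp_all add: pderiv_mp_mult pderiv_mp_one algebra_simps)
qed (simp add: pderiv_mp_one)

lemma pderiv_mp_Var: "pderiv_mp j (Var i :: 'a::comm_ring_1 mpoly) = (if i = j then 1 else 0)"
  by (simp add: Var_def pderiv_mp_single lookup_single when_def)

lemma mult_pderiv_mp_power_mult:
  "h * pderiv_mp j (h ^ m * f :: 'a::comm_ring_1 mpoly)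
     = of_nat m * pderiv_mp j h * (h ^ m * f) + h ^ (m + 1) * pderiv_mp j f"
proof -
  have h_power: "h * (of_nat m * h ^ (m - 1)) = of_nat m * h ^ m"
    by (cases m) simp_all
  have "h * pderiv_mp j (h ^ m * f)
          = h * (of_nat m * h ^ (m - 1)) * pderiv_mp j h * f + h ^ (m + 1) * pderiv_mp j f"
    by (simp add: pderiv_mp_mult pderiv_mp_power algebra_simps)
  then show ?thesis
    unfolding h_power by (simp add: algebra_simps)
qed

lemma in_poly_ring_iff:
  "in_poly_ring n p \<longleftrightarrow> (\<forall>m\<in>Poly_Mapping.keys p. Poly_Mapping.keys m \<subseteq> {..<n})"
  by (auto simp: in_poly_ring_def vars_def)

lemma in_poly_ring_add:
  "in_poly_ring n p \<Longrightarrow> in_poly_ring n q \<Longrightarrow> in_poly_ring n (p + q)"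
  using keys_add[of p q] by (auto simp: in_poly_ring_iff)

lemma in_poly_ring_diff:
  "in_poly_ring n (p :: 'a::comm_ring_1 mpoly) \<Longrightarrow> in_poly_ring n q \<Longrightarrow> in_poly_ring n (p - q)"
  using keys_diff[of p q] by (auto simp: in_poly_ring_iff)

lemma in_poly_ring_mult:
  "in_poly_ring n (p :: 'a::comm_ring_1 mpoly) \<Longrightarrow> in_poly_ring n q \<Longrightarrow> in_poly_ring n (p * q)"
  unfolding in_poly_ring_iff
proof
  fix m
  assume p: "\<forall>m\<in>Poly_Mapping.keys p. Poly_Mapping.keys m \<subseteq> {..<n}"
    and q: "\<forall>m\<in>Poly_Mapping.keys q. Poly_Mapping.keys m \<subseteq> {..<n}"
    and "m \<in> Poly_Mapping.keys (p * q)"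
  then obtain a b where "m = a + b" "a \<in> Poly_Mapping.keys p" "b \<in> Poly_Mapping.keys q"
    using keys_mult by blast
  then show "Poly_Mapping.keys m \<subseteq> {..<n}"
    using p q keys_add[of a b] by blast
qed

lemma in_poly_ring_of_nat: "in_poly_ring n (of_nat k :: 'a::comm_ring_1 mpoly)"
  unfolding in_poly_ring_iff by (metis empty_iff insert_iff keys_single keys_zero single_of_nat subset_iff)

lemma in_poly_ring_Var_power: "i < n \<Longrightarrow> in_poly_ring n (Var i ^ k :: 'a::comm_ring_1 mpoly)"
proof (induction k)
  case 0
  show ?case by (simp add: in_poly_ring_iff flip: single_one)
next
  case (Suc k)
  have "in_poly_ring n (Var i :: 'a mpoly)"
    using Suc.prems by (simp add: in_poly_ring_iff Var_def)
  then show ?case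
    using Suc by (simp add: in_poly_ring_mult)
qed

lemma in_poly_ring_pderiv_mp:
  "in_poly_ring n (p :: 'a::comm_ring_1 mpoly) \<Longrightarrow> in_poly_ring n (pderiv_mp j p)"
  unfolding in_poly_ring_iff
proof
  fix m
  assume p: "\<forall>m\<in>Poly_Mapping.keys p. Poly_Mapping.keys m \<subseteq> {..<n}"
    and "m \<in> Poly_Mapping.keys (pderiv_mp j p)"
  then obtain a where a: "a \<in> Poly_Mapping.keys p"
    and "m \<in> Poly_Mapping.keys (Poly_Mapping.single (a - Poly_Mapping.single j 1)
                                   (of_nat (Poly_Mapping.lookup a j) * Poly_Mapping.lookup p a))"
    using keys_sum[of "\<lambda>a. Poly_Mapping.single (a - Poly_Mapping.single j 1)
                          (of_nat (Poly_Mapping.lookup a j) * Poly_Mapping.lookup p a)" "Poly_Mapping.keys p"]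
    unfolding pderiv_mp_def by (meson UN_E subsetD)
  then have "m = a - Poly_Mapping.single j 1"
    by (simp split: if_splits)
  moreover have "Poly_Mapping.keys (a - Poly_Mapping.single j 1) \<subseteq> Poly_Mapping.keys a"
    by (auto simp: in_keys_iff lookup_minus)
  ultimately show "Poly_Mapping.keys m \<subseteq> {..<n}"
    using p a by blast
qed

lemma in_monomial_ideal_diff:
  assumes "in_monomial_ideal n d (p :: 'a::comm_ring_1 mpoly)" "in_monomial_ideal n d q"
  shows "in_monomial_ideal n d (p - q)"
proof -
  obtain g g' where "\<forall>i<n. in_poly_ring n (g i)" "p = (\<Sum>i<n. g i * Var i ^ d i)"
    and "\<forall>i<n. in_poly_ring n (g' i)" "q = (\<Sum>i<n. g' i * Var i ^ d i)"
    using assms unfolding in_monomial_ideal_def by blast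
  then show ?thesis
    unfolding in_monomial_ideal_def
    by (intro exI[of _ "\<lambda>i. g i - g' i"])
      (simp add: in_poly_ring_diff sum_subtractf left_diff_distrib)
qed

lemma in_monomial_ideal_mult_left:
  assumes "in_poly_ring n q" "in_monomial_ideal n d (p :: 'a::comm_ring_1 mpoly)"
  shows "in_monomial_ideal n d (q * p)"
proof -
  obtain g where "\<forall>i<n. in_poly_ring n (g i)" "p = (\<Sum>i<n. g i * Var i ^ d i)"
    using assms(2) unfolding in_monomial_ideal_def by blast
  then show ?thesis
    unfolding in_monomial_ideal_def
    by (intro exI[of _ "\<lambda>i. q * g i"])
      (simp add: assms(1) in_poly_ring_mult sum_distrib_left mult.assoc)
qed

lemma in_monomial_ideal_antimono:
  assumes "\<forall>i<n. e i \<le> d i" "in_monomial_ideal n d (p :: 'a::comm_ring_1 mpoly)"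
  shows "in_monomial_ideal n e p"
proof -
  obtain g where g: "\<forall>i<n. in_poly_ring n (g i)" and p: "p = (\<Sum>i<n. g i * Var i ^ d i)"
    using assms(2) unfolding in_monomial_ideal_def by blast
  have "p = (\<Sum>i<n. (g i * Var i ^ (d i - e i)) * Var i ^ e i)"
    unfolding p using assms(1)
    by (intro sum.cong refl) (simp add: mult.assoc power_add[symmetric])
  then show ?thesis
    unfolding in_monomial_ideal_def using g
    by (intro exI[of _ "\<lambda>i. g i * Var i ^ (d i - e i)"]) (simp add: in_poly_ring_mult in_poly_ring_Var_power)
qed

lemma in_monomial_ideal_pderiv_mp:
  assumes "j < n" "in_monomial_ideal n d (p :: 'a::comm_ring_1 mpoly)"
  shows "in_monomial_ideal n (d(j := d j - 1)) (pderiv_mp j p)"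
proof -
  define e where "e = d(j := d j - 1)"
  obtain g where g: "\<forall>i<n. in_poly_ring n (g i)" and p: "p = (\<Sum>i<n. g i * Var i ^ d i)"
    using assms(2) unfolding in_monomial_ideal_def by blast
  define G where "G i = pderiv_mp j (g i) * Var i ^ (d i - e i) + of_nat (if i = j then d j else 0) * g i"
    for i
  have "pderiv_mp j (g i * Var i ^ d i) = G i * Var i ^ e i" for i
  proof (cases "i = j")
    case True
    have "Var j ^ d j = Var j ^ (d j - e j) * (Var j ^ e j :: 'a mpoly)"
      by (simp add: e_def power_add[symmetric])
    moreover have "pderiv_mp j (Var j ^ d j :: 'a mpoly) = of_nat (d j) * Var j ^ e j"
      by (simp add: pderiv_mp_power pderiv_mp_Var e_def)
    ultimately show ?thesis
      using True by (simp add: G_def pderiv_mp_mult distrib_right mult.assoc mult.left_commute)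
  next
    case False
    then show ?thesis
      by (simp add: G_def e_def pderiv_mp_mult pderiv_mp_power pderiv_mp_Var)
  qed
  then have "pderiv_mp j p = (\<Sum>i<n. G i * Var i ^ e i)"
    by (simp add: p pderiv_mp_sum)
  moreover have "in_poly_ring n (G i)" if "i < n" for i
    unfolding G_def using g that assms(1)
    by (simp add: in_poly_ring_add in_poly_ring_mult in_poly_ring_pderiv_mp in_poly_ring_of_nat
        in_poly_ring_Var_power)
  ultimately show ?thesis
    unfolding in_monomial_ideal_def e_def by blast
qed

theorem lemma2p1:
  fixes f h :: "'k::field mpoly" and d :: "nat \<Rightarrow> nat" and n m j :: nat
  assumes "\<forall>i<n. d i > 0"
    and "in_poly_ring n f" and "in_poly_ring n h"
    and "in_monomial_ideal n d (h ^ m * f)"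
    and "j < n"
  shows "in_monomial_ideal n (d(j := d j - 1)) (h ^ (m + 1) * pderiv_mp j f)"
proof -
  let ?e = "d(j := d j - 1)"
  have "h ^ (m + 1) * pderiv_mp j f
          = h * pderiv_mp j (h ^ m * f) - (of_nat m * pderiv_mp j h) * (h ^ m * f)"
    by (simp add: mult_pderiv_mp_power_mult)
  also have "in_monomial_ideal n ?e \<dots>"
  proof (rule in_monomial_ideal_diff)
    show "in_monomial_ideal n ?e (h * pderiv_mp j (h ^ m * f))"
      by (rule in_monomial_ideal_mult_left[OF assms(3) in_monomial_ideal_pderiv_mp[OF assms(5,4)]])
    show "in_monomial_ideal n ?e ((of_nat m * pderiv_mp j h) * (h ^ m * f))"
      by (rule in_monomial_ideal_mult_left[OF _ in_monomial_ideal_antimono[OF _ assms(4)]])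
        (simp_all add: assms(3) in_poly_ring_mult in_poly_ring_of_nat in_poly_ring_pderiv_mp)
  qed
  finally show ?thesis .
qed

end
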